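(* Let $\alpha\in(0,1)$, $a_1,a_2\in\mathbb{R}$, and let $A$ be the $N\times N$ matrix defined below with $a_0=-a_2$. Let $\Omega_\alpha$ be the bounded open region enclosed by the curve $\beta(t)=1+e^{it}(1-e^{-it})^{\alpha}$, $0\le t\le 2\pi$, and let $R_N$ be the set of $(a_1,a_2)\in\mathbb{R}^2$ such that every eigenvalue of $A$ lies in $\Omega_\alpha$ (the stable region of the zero solution). For $j$ with $\sin(2\pi j/N)\neq 0$ let $\gamma_j$ be the closed curve in the $a_1a_2$-plane $$\gamma_j(t)=\left(\mathrm{Re}\!\left[e^{it}(1-e^{-it})^{\alpha}\right]+1,\ \frac{1}{2\sin(2\pi j/N)}\,\mathrm{Im}\!\left[e^{it}(1-e^{-it})^{\alpha}\right]\right),\quad 0\le t\le 2\pi .$$ Then: (i) if $N=1$ or $N=2$, $R_N=\{(a_1,a_2): 1-2^{\alpha}<a_1<1\}$; (ii) if $N\ge 3$ is odd, $R_N$ is the region bounded by the line $a_1=1$ and the curve $\gamma_{j^*}$ with $j^*=\lceil (N-1)/4\rceil$, i.e. the set of points with $a_1<1$ lying inside $\gamma_{j^*}$; (iii) if $N\ge 4$ is even, $R_N$ is the region bounded by the line $a_1=1$ and the curve $\gamma_{j^*}$ with $j^*=\lfloor N/4\rfloor$, i.e. the set of points with $a_1<1$ lying inside $\gamma_{j^*}$.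
   Context: Fractional-order linear coupled map lattice: for $\alpha\in(0,1)$, $X_{t+1}=X_0+\sum_{j=0}^{t}\frac{\Gamma(t-j+\alpha)}{\Gamma(\alpha)\Gamma(t-j+1)}(A-I)X_j$, $X_t\in\mathbb{R}^N$. Connectivity matrix for $N\ge 3$: $A$ is the $N\times N$ circulant matrix with $A_{k,k}=a_1$, $A_{k,k+1}=a_2$, $A_{k,k-1}=a_0$ (indices modulo $N$, periodic boundary conditions), all other entries $0$; for $N=2$, $A=\begin{pmatrix}a_1&a_0+a_2\\ a_0+a_2&a_1\end{pmatrix}$; for $N=1$, $A=(a_0+a_1+a_2)$. Powers $(1-e^{-it})^\alpha$ use the principal branch. By the stability criterion, the zero solution is asymptotically stable exactly when every eigenvalue of $A$ lies in $\Omega_\alpha$; a real number lies in $\Omega_\alpha$ iff it lies in $(1-2^{\alpha},1)$. $\lceil\cdot\rceil$ and $\lfloor\cdot\rfloor$ denote ceiling and integer part. *)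

theory Defs
  imports "HOL-Analysis.Analysis"
begin

text \<open>Square N x N matrices are represented as functions nat => nat => real,
  indices ranging over 0..N-1.\<close>

definition cml_matrix :: "nat \<Rightarrow> real \<Rightarrow> real \<Rightarrow> real \<Rightarrow> nat \<Rightarrow> nat \<Rightarrow> real" where
  "cml_matrix N a0 a1 a2 = (\<lambda>i j.
     if N = 1 then a0 + a1 + a2
     else if N = 2 then (if i = j then a1 else a0 + a2)
     else (if i = j then a1
           else if j = (i + 1) mod N then a2
           else if i = (j + 1) mod N then a0
           else 0))"

definition is_eigenvalue :: "nat \<Rightarrow> (nat \<Rightarrow> nat \<Rightarrow> real) \<Rightarrow> complex \<Rightarrow> bool" where
  "is_eigenvalue N M \<mu> \<longleftrightarrow>
     (\<exists>v :: nat \<Rightarrow> complex. (\<exists>i<N. v i \<noteq> 0) \<and>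
        (\<forall>i<N. (\<Sum>k<N. complex_of_real (M i k) * v k) = \<mu> * v i))"

text \<open>The curve beta, reparametrised from [0,2pi] to [0,1]; powr is the principal branch.\<close>
definition beta_curve :: "real \<Rightarrow> real \<Rightarrow> complex" where
  "beta_curve \<alpha> s = 1 + cis (2 * pi * s) * ((1 - cis (- (2 * pi * s))) powr (complex_of_real \<alpha>))"

definition Omega :: "real \<Rightarrow> complex set" where
  "Omega \<alpha> = inside (path_image (beta_curve \<alpha>))"

definition stable_region :: "real \<Rightarrow> nat \<Rightarrow> (real \<times> real) set" where
  "stable_region \<alpha> N = {(a1, a2). \<forall>\<mu>. is_eigenvalue N (cml_matrix N (-a2) a1 a2) \<mu> \<longrightarrow> \<mu> \<in> Omega \<alpha>}"

text \<open>The curve gamma_j in the (a1,a2)-plane, reparametrised from [0,2pi] to [0,1].\<close>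
definition gamma_curve :: "real \<Rightarrow> nat \<Rightarrow> nat \<Rightarrow> real \<Rightarrow> real \<times> real" where
  "gamma_curve \<alpha> N j s =
     (let w = cis (2 * pi * s) * ((1 - cis (- (2 * pi * s))) powr (complex_of_real \<alpha>)) in
      (Re w + 1, Im w / (2 * sin (2*pi*real j / real N))))"

end

theory Submission
  imports Defs
begin

(* Seen from the point 1, the curve beta is a polar graph: for 0 < s < 1 it passes through
   1 - h(\<theta>) e^(i\<theta>) with \<theta> = (2\<pi>s - \<pi>)(1 - \<alpha>/2) and h(\<theta>) = (2 cos (\<theta>/(2 - \<alpha>)))^\<alpha>, and h
   decreases in |\<theta>|. Hence \<Omega>_\<alpha> = {z \<noteq> 1. |1 - z| < h(|arg (1 - z)|)}, and every vertical line
   Re z = x < 1 meets \<Omega>_\<alpha> in a segment symmetric about the real axis.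
   For a0 = -a2 the eigenvalues of the circulant matrix are a1 + 2 i a2 sin (2\<pi>k/N), with
   eigenvectors (\<omega>^(ik))_i for \<omega> = e^(2\<pi>i/N); a discrete Fourier transform shows that there
   are no others. So all eigenvalues lie in \<Omega>_\<alpha> iff a1 does and the one maximising
   |sin (2\<pi>k/N)| does. That maximum is attained at k = j*, and the linear map
   (a1, a2) \<mapsto> a1 + 2 i a2 sin (2\<pi>j*/N) carries the inside of \<gamma>_j* onto \<Omega>_\<alpha>. *)

lemma one_minus_cis: "1 - cis (- t) = complex_of_real (2 * sin (t/2)) * cis ((pi - t)/2)"
proof -
  have "sin t = 2 * sin (t/2) * cos (t/2)" using sin_double[of "t/2"] by simp
  moreover have "cos t = 1 - 2 * (sin (t/2))^2" using cos_double_sin[of "t/2"] by simp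
  moreover have "cos ((pi - t)/2) = sin (t/2)" "sin ((pi - t)/2) = cos (t/2)"
    using cos_diff[of "pi/2" "t/2"] sin_diff[of "pi/2" "t/2"] by (simp_all add: diff_divide_distrib)
  ultimately show ?thesis
    by (simp add: complex_eq_iff power2_eq_square algebra_simps)
qed

lemma powr_of_real_mult_cis:
  assumes "r > 0" "-pi < \<phi>" "\<phi> \<le> pi"
  shows "(complex_of_real r * cis \<phi>) powr complex_of_real a = complex_of_real (r powr a) * cis (a * \<phi>)"
proof -
  have e: "complex_of_real r * cis \<phi> = exp (Complex (ln r) \<phi>)"
    using assms by (simp add: exp_eq_polar)
  have "Ln (exp (Complex (ln r) \<phi>)) = Complex (ln r) \<phi>" using assms by (intro Ln_exp) auto
  then have "(complex_of_real r * cis \<phi>) powr complex_of_real a = exp (complex_of_real a * Complex (ln r) \<phi>)"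
    using assms by (simp add: powr_def e)
  also have "\<dots> = complex_of_real (r powr a) * cis (a * \<phi>)"
    using assms by (simp add: exp_eq_polar powr_def)
  finally show ?thesis .
qed

lemma cis_mult_one_minus_cis_powr:
  assumes "0 < t" "t < 2*pi"
  shows "cis t * (1 - cis (- t)) powr complex_of_real a
       = - complex_of_real ((2 * sin (t/2)) powr a) * cis ((t - pi) * (1 - a/2))"
proof -
  have "sin (t/2) > 0" using assms by (intro sin_gt_zero) auto
  then have "(1 - cis (- t)) powr complex_of_real a
      = complex_of_real ((2 * sin (t/2)) powr a) * cis (a * ((pi - t)/2))"
    unfolding one_minus_cis using assms by (intro powr_of_real_mult_cis) auto
  moreover have "cis t * cis (a * ((pi - t)/2)) = cis ((t - pi) * (1 - a/2) + pi)"
    by (simp add: cis_mult) (rule arg_cong[where f=cis], simp add: algebra_simps diff_divide_distrib add_divide_distrib)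
  moreover have "cis (x + pi) = - cis x" for x by (simp add: cis_def complex_eq_iff)
  ultimately show ?thesis by (simp only: mult.left_commute[of "cis t"]) simp
qed

lemma beta_curve_polar:
  assumes "0 < s" "s < 1"
  shows "beta_curve a s
       = 1 - complex_of_real ((2 * sin (pi * s)) powr a) * cis ((2 * pi * s - pi) * (1 - a/2))"
  using cis_mult_one_minus_cis_powr[of "2 * pi * s" a] assms unfolding beta_curve_def by simp

lemma beta_curve_0: "beta_curve a 0 = 1"
  by (simp add: beta_curve_def)

lemma beta_curve_1: "beta_curve a 1 = 1"
proof -
  have "cis (- (2 * pi)) = 1" by (simp add: complex_eq_iff)
  then show ?thesis by (simp add: beta_curve_def)
qed

(* The radial function h of the curve; it vanishes for |\<theta>| \<ge> \<pi>(1 - a/2), where there are no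
   curve points. *)
definition beta_radius :: "real \<Rightarrow> real \<Rightarrow> real" where
  "beta_radius a \<theta> = (max 0 (2 * cos (\<theta> / (2 - a)))) powr a"

(* This is |Arg (1 - z)|, written with arccos because that form is continuous on -{1}. *)
definition angle_from_one :: "complex \<Rightarrow> real" where
  "angle_from_one z = arccos (Re (1 - z) / cmod (1 - z))"

definition beta_inside :: "real \<Rightarrow> complex set" where
  "beta_inside a = {z. z \<noteq> 1 \<and> cmod (1 - z) < beta_radius a (angle_from_one z)}"

definition beta_outside :: "real \<Rightarrow> complex set" where
  "beta_outside a = {z. z \<noteq> 1 \<and> cmod (1 - z) > beta_radius a (angle_from_one z)}"

lemma Re_divide_cmod_bounds: "-1 \<le> Re u / cmod u" "Re u / cmod u \<le> 1"
proof -
  have "\<bar>Re u / cmod u\<bar> \<le> 1"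
    using abs_Re_le_cmod[of u] by (cases "u = 0") (simp_all add: abs_divide divide_le_eq)
  then show "-1 \<le> Re u / cmod u" "Re u / cmod u \<le> 1" by linarith+
qed

lemma angle_from_one_bounds: "0 \<le> angle_from_one z" "angle_from_one z \<le> pi"
  unfolding angle_from_one_def using Re_divide_cmod_bounds[of "1 - z"]
  by (auto intro: arccos_lbound arccos_ubound)

lemma polar_about_one:
  assumes "r > 0" "\<bar>\<psi>\<bar> \<le> pi" and z: "z = 1 - complex_of_real r * cis \<psi>"
  shows "angle_from_one z = \<bar>\<psi>\<bar>" "cmod (1 - z) = r" "z \<noteq> 1"
proof -
  show r: "cmod (1 - z) = r" using assms by (simp add: norm_mult)
  then show "z \<noteq> 1" using assms by auto
  have "Re (1 - z) / cmod (1 - z) = cos \<psi>" using r assms by simp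
  then show "angle_from_one z = \<bar>\<psi>\<bar>"
    unfolding angle_from_one_def using arccos_cos_eq_abs[OF assms(2)] by simp
qed

lemma polar_about_one_Arg:
  assumes "z \<noteq> 1"
  shows "z = 1 - complex_of_real (cmod (1 - z)) * cis (Arg (1 - z))"
    and "angle_from_one z = \<bar>Arg (1 - z)\<bar>" and "\<bar>Arg (1 - z)\<bar> \<le> pi"
proof -
  show z: "z = 1 - complex_of_real (cmod (1 - z)) * cis (Arg (1 - z))"
    using rcis_cmod_Arg[of "1 - z"] by (simp add: rcis_def)
  show "\<bar>Arg (1 - z)\<bar> \<le> pi" using Arg_bounded[of "1 - z"] by auto
  then show "angle_from_one z = \<bar>Arg (1 - z)\<bar>"
    using polar_about_one(1)[OF _ _ z] assms by simp
qed

lemma angle_from_one_of_real: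
  shows "x < 1 \<Longrightarrow> angle_from_one (complex_of_real x) = 0"
    and "x > 1 \<Longrightarrow> angle_from_one (complex_of_real x) = pi"
proof -
  show "x < 1 \<Longrightarrow> angle_from_one (complex_of_real x) = 0"
    using polar_about_one(1)[of "1 - x" 0 "complex_of_real x"] by simp
  show "x > 1 \<Longrightarrow> angle_from_one (complex_of_real x) = pi"
    using polar_about_one(1)[of "x - 1" pi "complex_of_real x"] by simp
qed

lemma beta_radius_nonneg: "beta_radius a \<theta> \<ge> 0"
  by (simp add: beta_radius_def)

lemma beta_radius_le: "0 < a \<Longrightarrow> beta_radius a \<theta> \<le> 2 powr a"
  unfolding beta_radius_def by (intro powr_mono2) auto

lemma beta_radius_0: "beta_radius a 0 = 2 powr a"
  by (simp add: beta_radius_def)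

lemma beta_radius_pi:
  assumes "0 < a" "a < 1"
  shows "beta_radius a pi = 0"
proof -
  have "cos (pi / (2 - a)) < 0" using assms
    by (intro cos_lt_zero_pi) (auto simp: field_simps)
  then show ?thesis by (simp add: beta_radius_def max_def)
qed

lemma continuous_on_beta_radius:
  assumes "0 < a" "a < 1"
  shows "continuous_on UNIV (beta_radius a)"
  unfolding beta_radius_def using assms by (intro continuous_on_powr' continuous_intros) auto

lemma beta_radius_antimono:
  assumes "0 < a" "a < 1" "0 \<le> \<theta>1" "\<theta>1 \<le> \<theta>2" "\<theta>2 \<le> pi"
  shows "beta_radius a \<theta>2 \<le> beta_radius a \<theta>1"
proof -
  have "pi \<le> pi * (2 - a)" using assms by simp
  then have "\<theta>2 \<le> pi * (2 - a)" using assms by linarith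
  then have "\<theta>2 / (2 - a) \<le> pi" using assms by (simp add: divide_le_eq)
  moreover have "\<theta>1 / (2 - a) \<le> \<theta>2 / (2 - a)" using assms by (simp add: divide_right_mono)
  ultimately have "cos (\<theta>2 / (2 - a)) \<le> cos (\<theta>1 / (2 - a))"
    using assms by (intro cos_monotone_0_pi_le) auto
  then show ?thesis unfolding beta_radius_def using assms by (intro powr_mono2) auto
qed

lemma beta_radius_pos_imp:
  assumes "0 < a" "a < 1" "0 \<le> \<theta>" "\<theta> \<le> pi" "beta_radius a \<theta> > 0"
  shows "\<theta> < pi * (1 - a/2)"
proof (rule ccontr)
  assume "\<not> \<theta> < pi * (1 - a/2)"
  then have "pi/2 \<le> \<theta> / (2 - a)" using assms by (simp add: field_simps)
  moreover have "\<theta> / (2 - a) \<le> pi"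
  proof -
    have "pi \<le> pi * (2 - a)" using assms by simp
    then have "\<theta> \<le> pi * (2 - a)" using assms by linarith
    then show ?thesis using assms by (simp add: divide_le_eq)
  qed
  ultimately have "cos (\<theta> / (2 - a)) \<le> 0"
    using cos_monotone_0_pi_le[of "pi/2" "\<theta>/(2-a)"] by simp
  then have "beta_radius a \<theta> = 0" by (simp add: beta_radius_def max_def)
  with assms show False by simp
qed

lemma beta_radius_eq:
  assumes "0 < a" "a < 1" "\<bar>\<psi>\<bar> < pi * (1 - a/2)"
  shows "beta_radius a \<bar>\<psi>\<bar> = (2 * cos (\<psi> / (2 - a))) powr a" and "beta_radius a \<bar>\<psi>\<bar> > 0"
proof -
  have "\<bar>\<psi> / (2 - a)\<bar> < pi / 2" using assms by (simp add: abs_divide field_simps)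
  then have c: "cos (\<psi> / (2 - a)) > 0" by (intro cos_gt_zero_pi) linarith+
  have "cos (\<bar>\<psi>\<bar> / (2 - a)) = cos (\<psi> / (2 - a))"
    by (cases "\<psi> \<ge> 0") (simp_all add: abs_if)
  then show "beta_radius a \<bar>\<psi>\<bar> = (2 * cos (\<psi> / (2 - a))) powr a" using c
    by (simp add: beta_radius_def)
  then show "beta_radius a \<bar>\<psi>\<bar> > 0" using c by simp
qed

lemma beta_curve_on_radius:
  assumes "0 < a" "a < 1" "0 < s" "s < 1" and z: "z = beta_curve a s"
  shows "z \<noteq> 1" "cmod (1 - z) = beta_radius a (angle_from_one z)"
proof -
  define \<psi> where "\<psi> = (2 * pi * s - pi) * (1 - a/2)"
  define r where "r = (2 * sin (pi * s)) powr a"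
  have "sin (pi * s) > 0" using assms by (intro sin_gt_zero) auto
  then have r: "r > 0" unfolding r_def by simp
  have z: "z = 1 - complex_of_real r * cis \<psi>"
    using z beta_curve_polar[OF assms(3,4)] by (simp add: r_def \<psi>_def)
  have "\<bar>2 * pi * s - pi\<bar> < pi" using assms by (auto simp: abs_if)
  then have \<psi>: "\<bar>\<psi>\<bar> < pi * (1 - a/2)" unfolding \<psi>_def using assms by (simp add: abs_mult)
  moreover have "pi * (1 - a/2) \<le> pi" using assms by simp
  ultimately have "\<bar>\<psi>\<bar> \<le> pi" by linarith
  note polar = polar_about_one[OF r this z]
  have "\<psi> / (2 - a) = pi * s - pi/2" unfolding \<psi>_def using assms by (simp add: field_simps)
  then have "cos (\<psi> / (2 - a)) = sin (pi * s)" by (simp add: cos_diff)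
  then have "beta_radius a (angle_from_one z) = r"
    using beta_radius_eq(1)[OF assms(1,2) \<psi>] polar(1) by (simp add: r_def)
  then show "z \<noteq> 1" "cmod (1 - z) = beta_radius a (angle_from_one z)" using polar by simp_all
qed

lemma beta_curve_onto_radius:
  assumes "0 < a" "a < 1" "z \<noteq> 1" and eq: "cmod (1 - z) = beta_radius a (angle_from_one z)"
  obtains s where "0 < s" "s < 1" "beta_curve a s = z"
proof -
  define \<psi> where "\<psi> = Arg (1 - z)"
  note polar = polar_about_one_Arg[OF assms(3), folded \<psi>_def]
  have "cmod (1 - z) > 0" using assms(3) by simp
  then have "beta_radius a \<bar>\<psi>\<bar> > 0" using eq unfolding polar(2) by linarith
  then have \<psi>: "\<bar>\<psi>\<bar> < pi * (1 - a/2)" using beta_radius_pos_imp[OF assms(1,2) _ polar(3)] by simp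
  define q where "q = \<psi> / (1 - a/2)"
  define s where "s = (q + pi) / (2 * pi)"
  have "\<bar>q\<bar> < pi" unfolding q_def using \<psi> assms by (simp add: abs_divide field_simps)
  then have s01: "0 < s" "s < 1" unfolding s_def by (auto simp: field_simps abs_less_iff)
  have "pi * s = \<psi> / (2 - a) + pi/2" unfolding s_def q_def using assms by (simp add: field_simps)
  then have "(2 * sin (pi * s)) powr a = cmod (1 - z)"
    using beta_radius_eq(1)[OF assms(1,2) \<psi>] eq polar(2) by (simp add: sin_add)
  moreover have "(2 * pi * s - pi) * (1 - a/2) = \<psi>"
    unfolding s_def q_def using assms by (simp add: field_simps)
  ultimately have "beta_curve a s = z" using beta_curve_polar[OF s01] polar(1) \<psi>_def by simp
  with s01 show thesis by (rule that)
qed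

lemma path_image_beta_curve:
  assumes "0 < a" "a < 1"
  shows "path_image (beta_curve a)
       = insert 1 {z. z \<noteq> 1 \<and> cmod (1 - z) = beta_radius a (angle_from_one z)}"
proof (rule set_eqI, rule iffI)
  fix z assume "z \<in> path_image (beta_curve a)"
  then obtain s where s: "0 \<le> s" "s \<le> 1" and z: "z = beta_curve a s"
    unfolding path_image_def by auto
  show "z \<in> insert 1 {z. z \<noteq> 1 \<and> cmod (1 - z) = beta_radius a (angle_from_one z)}"
  proof (cases "s = 0 \<or> s = 1")
    case True
    then show ?thesis using z beta_curve_0 beta_curve_1 by auto
  next
    case False
    then have "0 < s" "s < 1" using s by auto
    from beta_curve_on_radius[OF assms this z] show ?thesis by simp
  qed
next
  fix z assume z: "z \<in> insert 1 {z. z \<noteq> 1 \<and> cmod (1 - z) = beta_radius a (angle_from_one z)}"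
  show "z \<in> path_image (beta_curve a)"
  proof (cases "z = 1")
    case True then show ?thesis using beta_curve_0 unfolding path_image_def by force
  next
    case False
    then have "cmod (1 - z) = beta_radius a (angle_from_one z)" using z by simp
    then obtain s where "0 < s" "s < 1" "beta_curve a s = z"
      by (rule beta_curve_onto_radius[OF assms False])
    then show ?thesis unfolding path_image_def by force
  qed
qed

lemma inside_eq_of_partition:
  fixes P S E :: "'a::real_normed_vector set"
  assumes "-P = S \<union> E" "S \<inter> E = {}" "open S" "open E" "connected S" "connected E"
    "bounded S" "\<not> bounded E"
  shows "inside P = S"
proof (rule set_eqI, rule iffI)
  fix x assume "x \<in> inside P"
  then have xP: "x \<notin> P" and bd: "bounded (connected_component_set (-P) x)"
    unfolding inside_def by auto
  have "x \<notin> E"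
  proof
    assume "x \<in> E"
    then have "E \<subseteq> connected_component_set (-P) x"
      using assms by (intro connected_component_maximal) auto
    then show False using bd assms(8) bounded_subset by blast
  qed
  then show "x \<in> S" using xP assms(1) by blast
next
  fix x assume xS: "x \<in> S"
  then have xP: "x \<notin> P" using assms(1) by blast
  let ?C = "connected_component_set (-P) x"
  have "?C \<subseteq> S \<union> E" using assms(1) connected_component_subset by metis
  moreover have "x \<in> ?C" using xP by simp
  ultimately have "?C \<subseteq> S"
    using connectedD[OF connected_connected_component assms(3) assms(4)] assms(2) xS by blast
  then have "bounded ?C" using assms(7) bounded_subset by blast
  then show "x \<in> inside P" using xP unfolding inside_def by auto
qed

lemma continuous_on_angle_from_one: "continuous_on (-{1}) angle_from_one"
  unfolding angle_from_one_def
proof (intro continuous_on_arccos continuous_intros ballI conjI)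
  show "- 1 \<le> Re (1 - z) / cmod (1 - z)" "Re (1 - z) / cmod (1 - z) \<le> 1" for z
    by (rule Re_divide_cmod_bounds)+
qed auto

lemma continuous_on_beta_radius_angle:
  assumes "0 < a" "a < 1"
  shows "continuous_on (-{1}) (\<lambda>z. beta_radius a (angle_from_one z))"
  using continuous_on_compose2[OF continuous_on_beta_radius[OF assms] continuous_on_angle_from_one]
  by auto

lemma continuous_on_beta_radius_abs:
  assumes "0 < a" "a < 1"
  shows "continuous_on UNIV (\<lambda>x::real \<times> real. beta_radius a \<bar>fst x\<bar>)"
  by (intro continuous_on_compose2[OF continuous_on_beta_radius[OF assms]] continuous_intros) auto

lemma open_beta_inside:
  assumes "0 < a" "a < 1"
  shows "open (beta_inside a)"
proof -
  have "beta_inside a = (-{1}) \<inter> (\<lambda>z. cmod (1 - z) - beta_radius a (angle_from_one z)) -` {..<0}"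
    unfolding beta_inside_def by auto
  then show ?thesis
    by (auto intro!: continuous_open_preimage continuous_intros continuous_on_beta_radius_angle[OF assms])
qed

lemma open_beta_outside:
  assumes "0 < a" "a < 1"
  shows "open (beta_outside a)"
proof -
  have "beta_outside a = (-{1}) \<inter> (\<lambda>z. cmod (1 - z) - beta_radius a (angle_from_one z)) -` {0<..}"
    unfolding beta_outside_def by auto
  then show ?thesis
    by (auto intro!: continuous_open_preimage continuous_intros continuous_on_beta_radius_angle[OF assms])
qed

lemma bounded_beta_inside:
  assumes "0 < a"
  shows "bounded (beta_inside a)"
  unfolding bounded_iff
proof (intro exI ballI)
  fix z assume "z \<in> beta_inside a"
  then have "cmod (1 - z) \<le> 2 powr a"
    using beta_radius_le[OF assms, of "angle_from_one z"] unfolding beta_inside_def by simp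
  moreover have "cmod z \<le> 1 + cmod (1 - z)" using norm_triangle_ineq4[of 1 "1 - z"] by simp
  ultimately show "cmod z \<le> 1 + 2 powr a" by simp
qed

lemma of_real_in_beta_outside:
  assumes "0 < a" "a < 1" "x > 1"
  shows "complex_of_real x \<in> beta_outside a"
  using assms beta_radius_pi[OF assms(1,2)] angle_from_one_of_real(2)[OF assms(3)]
  unfolding beta_outside_def by (simp flip: of_real_diff)

lemma unbounded_beta_outside:
  assumes "0 < a" "a < 1"
  shows "\<not> bounded (beta_outside a)"
proof
  assume "bounded (beta_outside a)"
  then obtain B where B: "\<forall>z\<in>beta_outside a. cmod z \<le> B" unfolding bounded_iff by auto
  have "complex_of_real (max 2 (B + 1)) \<in> beta_outside a"
    by (rule of_real_in_beta_outside[OF assms]) simp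
  then have "max 2 (B + 1) \<le> B" using B by (metis norm_of_real abs_of_pos max.strict_coboundedI1 zero_less_numeral)
  then show False by simp
qed

lemma connected_beta_inside:
  assumes "0 < a" "a < 1"
  shows "connected (beta_inside a)"
proof -
  define c where "c = pi * (1 - a/2)"
  define \<Phi> where "\<Phi> = (\<lambda>(\<psi>, m). 1 - complex_of_real (m * beta_radius a \<bar>\<psi>\<bar>) * cis \<psi>)"
  have "continuous_on UNIV (\<lambda>x::real\<times>real. 1 - complex_of_real (snd x * beta_radius a \<bar>fst x\<bar>) * cis (fst x))"
    by (intro continuous_intros continuous_on_beta_radius_abs[OF assms])
  then have cont: "continuous_on UNIV \<Phi>" unfolding \<Phi>_def by (simp add: case_prod_beta)
  have "beta_inside a = \<Phi> ` ({-c<..<c} \<times> {0<..<1})"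
  proof (rule set_eqI, rule iffI)
    fix z assume "z \<in> beta_inside a"
    then have z1: "z \<noteq> 1" and lt: "cmod (1 - z) < beta_radius a (angle_from_one z)"
      unfolding beta_inside_def by auto
    define \<psi> where "\<psi> = Arg (1 - z)"
    note polar = polar_about_one_Arg[OF z1, folded \<psi>_def]
    have r: "beta_radius a \<bar>\<psi>\<bar> > 0" using lt norm_ge_zero[of "1 - z"] unfolding polar(2) by linarith
    then have "\<bar>\<psi>\<bar> < c" using beta_radius_pos_imp[OF assms _ polar(3)] c_def by simp
    moreover define m where "m = cmod (1 - z) / beta_radius a \<bar>\<psi>\<bar>"
    have "0 < m" "m < 1" unfolding m_def using lt polar(2) z1 r by (auto simp: field_simps)
    moreover have "\<Phi> (\<psi>, m) = z" unfolding \<Phi>_def m_def using r polar(1) by simp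
    ultimately show "z \<in> \<Phi> ` ({-c<..<c} \<times> {0<..<1})"
      by (intro image_eqI[of _ _ "(\<psi>, m)"]) (auto simp: abs_less_iff)
  next
    fix z assume "z \<in> \<Phi> ` ({-c<..<c} \<times> {0<..<1})"
    then obtain \<psi> m where "-c < \<psi>" "\<psi> < c" "0 < m" "m < 1" "z = \<Phi> (\<psi>, m)" by auto
    then have pm: "\<bar>\<psi>\<bar> < c" "0 < m" "m < 1" "z = \<Phi> (\<psi>, m)" by auto
    have r: "beta_radius a \<bar>\<psi>\<bar> > 0" using beta_radius_eq(2)[OF assms] pm c_def by simp
    have "c \<le> pi" unfolding c_def using assms by simp
    then have "\<bar>\<psi>\<bar> \<le> pi" using pm by linarith
    from polar_about_one[OF _ this, of "m * beta_radius a \<bar>\<psi>\<bar>" z] pm r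
    show "z \<in> beta_inside a" unfolding beta_inside_def \<Phi>_def by simp
  qed
  moreover have "connected ({-c<..<c} \<times> {0<..<(1::real)})" by (intro connected_Times) auto
  ultimately show ?thesis
    using connected_continuous_image[OF continuous_on_subset[OF cont]] by auto
qed

lemma connected_beta_outside:
  assumes "0 < a" "a < 1"
  shows "connected (beta_outside a)"
proof -
  define \<Psi> where "\<Psi> = (\<lambda>(\<psi>, m). 1 - complex_of_real (beta_radius a \<bar>\<psi>\<bar> + m) * cis \<psi>)"
  have "continuous_on UNIV (\<lambda>x::real\<times>real. 1 - complex_of_real (beta_radius a \<bar>fst x\<bar> + snd x) * cis (fst x))"
    by (intro continuous_intros continuous_on_beta_radius_abs[OF assms])
  then have cont: "continuous_on UNIV \<Psi>" unfolding \<Psi>_def by (simp add: case_prod_beta)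
  have "beta_outside a = \<Psi> ` ({-pi..pi} \<times> {0<..})"
  proof (rule set_eqI, rule iffI)
    fix z assume "z \<in> beta_outside a"
    then have z1: "z \<noteq> 1" and gt: "cmod (1 - z) > beta_radius a (angle_from_one z)"
      unfolding beta_outside_def by auto
    define \<psi> where "\<psi> = Arg (1 - z)"
    note polar = polar_about_one_Arg[OF z1, folded \<psi>_def]
    define m where "m = cmod (1 - z) - beta_radius a \<bar>\<psi>\<bar>"
    have "m > 0" unfolding m_def using gt polar(2) by simp
    moreover have "\<Psi> (\<psi>, m) = z" unfolding \<Psi>_def m_def using polar(1) by simp
    ultimately show "z \<in> \<Psi> ` ({-pi..pi} \<times> {0<..})" using polar(3)
      by (intro image_eqI[of _ _ "(\<psi>, m)"]) (auto simp: abs_le_iff)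
  next
    fix z assume "z \<in> \<Psi> ` ({-pi..pi} \<times> {0<..})"
    then obtain \<psi> m where "-pi \<le> \<psi>" "\<psi> \<le> pi" "0 < m" "z = \<Psi> (\<psi>, m)" by auto
    then have pm: "\<bar>\<psi>\<bar> \<le> pi" "0 < m" "z = \<Psi> (\<psi>, m)" by auto
    have "beta_radius a \<bar>\<psi>\<bar> + m > 0" using beta_radius_nonneg[of a "\<bar>\<psi>\<bar>"] pm by simp
    from polar_about_one[OF this pm(1), of z] pm
    show "z \<in> beta_outside a" unfolding beta_outside_def \<Psi>_def by simp
  qed
  moreover have "connected ({-pi..pi} \<times> ({0<..} :: real set))" by (intro connected_Times) auto
  ultimately show ?thesis
    using connected_continuous_image[OF continuous_on_subset[OF cont]] by auto
qed

lemma compl_path_image_beta_curve: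
  assumes "0 < a" "a < 1"
  shows "- path_image (beta_curve a) = beta_inside a \<union> beta_outside a"
  unfolding path_image_beta_curve[OF assms] beta_inside_def beta_outside_def by auto

lemma beta_inside_Int_outside: "beta_inside a \<inter> beta_outside a = {}"
  unfolding beta_inside_def beta_outside_def by auto

lemma Omega_eq_beta_inside:
  assumes "0 < a" "a < 1"
  shows "Omega a = beta_inside a"
  unfolding Omega_def
  by (rule inside_eq_of_partition[OF compl_path_image_beta_curve[OF assms] beta_inside_Int_outside])
    (use assms open_beta_inside open_beta_outside connected_beta_inside connected_beta_outside
       bounded_beta_inside unbounded_beta_outside in auto)

lemma of_real_in_beta_inside_iff:
  assumes "0 < a" "a < 1"
  shows "complex_of_real x \<in> beta_inside a \<longleftrightarrow> 1 - 2 powr a < x \<and> x < 1"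
proof -
  have cm: "cmod (1 - complex_of_real x) = \<bar>1 - x\<bar>" by (metis norm_of_real of_real_1 of_real_diff)
  consider "x < 1" | "x = 1" | "x > 1" by linarith
  then show ?thesis
  proof cases
    case 1
    then show ?thesis using cm angle_from_one_of_real(1)
      by (auto simp: beta_inside_def beta_radius_0)
  next
    case 2 then show ?thesis unfolding beta_inside_def by simp
  next
    case 3
    then show ?thesis using cm angle_from_one_of_real(2) beta_radius_pi[OF assms]
      by (auto simp: beta_inside_def)
  qed
qed

(* Moving towards the real axis decreases both |1 - z| and the angle, and beta_radius is
   antitone in the angle. *)
lemma beta_inside_shrink_Im:
  assumes "0 < a" "a < 1" "x < 1" "Complex x y \<in> beta_inside a" "\<bar>y'\<bar> \<le> \<bar>y\<bar>"
  shows "Complex x y' \<in> beta_inside a"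
proof -
  have cm: "cmod (1 - Complex x w) = sqrt ((1 - x)^2 + w^2)" for w
    by (simp add: cmod_def)
  have le: "cmod (1 - Complex x y') \<le> cmod (1 - Complex x y)"
    unfolding cm using assms(5) by (simp add: abs_le_square_iff)
  have pos: "cmod (1 - Complex x w) > 0" for w using assms(3) by (simp add: complex_eq_iff)
  have th: "angle_from_one (Complex x w) = arccos ((1 - x) / cmod (1 - Complex x w))" for w
    unfolding angle_from_one_def by simp
  have "(1 - x) / cmod (1 - Complex x y) \<le> (1 - x) / cmod (1 - Complex x y')"
    using assms(3) le pos by (intro divide_left_mono) auto
  then have "angle_from_one (Complex x y') \<le> angle_from_one (Complex x y)"
    unfolding th using Re_divide_cmod_bounds[of "1 - Complex x y"] Re_divide_cmod_bounds[of "1 - Complex x y'"]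
    by (intro arccos_le_arccos) auto
  then have "beta_radius a (angle_from_one (Complex x y)) \<le> beta_radius a (angle_from_one (Complex x y'))"
    using angle_from_one_bounds by (intro beta_radius_antimono assms(1,2))
  moreover have "cmod (1 - Complex x y) < beta_radius a (angle_from_one (Complex x y))"
    using assms(4) unfolding beta_inside_def by auto
  moreover have "Complex x y' \<noteq> 1" using assms(3) by (simp add: complex_eq_iff)
  ultimately show ?thesis using le unfolding beta_inside_def by auto
qed

lemma inside_gamma_curve:
  assumes "0 < a" "a < 1" "sin (2*pi*real j/real N) \<noteq> 0"
  shows "inside (path_image (gamma_curve a N j))
       = {p. Complex (fst p) (2 * sin (2*pi*real j/real N) * snd p) \<in> beta_inside a}"
proof -
  define c where "c = sin (2*pi*real j/real N)"
  define T where "T = (\<lambda>z::complex. (Re z, Im z / (2 * c)))"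
  define U where "U = (\<lambda>p::real\<times>real. Complex (fst p) (2 * c * snd p))"
  have TU: "T ` X = U -` X" for X
  proof (rule set_eqI, rule iffI)
    fix p assume "p \<in> T ` X"
    then show "p \<in> U -` X" using assms(3) by (auto simp: T_def U_def c_def)
  next
    fix p assume "p \<in> U -` X"
    moreover have "T (U p) = p" using assms(3) by (simp add: T_def U_def c_def)
    ultimately show "p \<in> T ` X" by force
  qed
  have "gamma_curve a N j = T \<circ> beta_curve a"
    by (rule ext) (simp add: gamma_curve_def beta_curve_def T_def c_def Let_def)
  then have P: "path_image (gamma_curve a N j) = U -` path_image (beta_curve a)"
    by (simp add: path_image_compose TU)
  have lin: "bounded_linear T"
    unfolding T_def
    by (intro bounded_linear_Pair bounded_linear_Re bounded_linear_compose[OF bounded_linear_divide]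
        bounded_linear_Im)
  then have cT: "continuous_on UNIV T" using linear_continuous_on by blast
  have "linear U" unfolding linear_iff U_def by (simp add: complex_eq_iff algebra_simps)
  then have linU: "bounded_linear U" by (simp add: linear_conv_bounded_linear)
  then have cU: "continuous_on UNIV U" using linear_continuous_on by blast
  have UT: "U (T z) = z" for z using assms(3) by (simp add: T_def U_def c_def complex_eq_iff)
  have "inside (path_image (gamma_curve a N j)) = U -` beta_inside a"
  proof (rule inside_eq_of_partition)
    show "- path_image (gamma_curve a N j) = U -` beta_inside a \<union> U -` beta_outside a"
      unfolding P using compl_path_image_beta_curve[OF assms(1,2)] by blast
    show "U -` beta_inside a \<inter> U -` beta_outside a = {}"
      using beta_inside_Int_outside by blast
    show "open (U -` beta_inside a)" "open (U -` beta_outside a)"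
      using continuous_open_preimage[OF cU open_UNIV] open_beta_inside open_beta_outside assms
      by auto
    show "connected (U -` beta_inside a)" "connected (U -` beta_outside a)"
      unfolding TU[symmetric] using connected_beta_inside connected_beta_outside assms
      by (auto intro!: connected_continuous_image[OF continuous_on_subset[OF cT]])
    show "bounded (U -` beta_inside a)"
      unfolding TU[symmetric] by (rule bounded_linear_image[OF bounded_beta_inside[OF assms(1)] lin])
    have "U ` T ` beta_outside a = beta_outside a" by (simp add: image_image UT)
    then show "\<not> bounded (U -` beta_outside a)"
      unfolding TU[symmetric] using bounded_linear_image[OF _ linU, of "T ` beta_outside a"]
        unbounded_beta_outside[OF assms(1,2)] by metis
  qed
  then show ?thesis by (auto simp: U_def c_def)
qed

definition cyc_succ :: "nat \<Rightarrow> nat \<Rightarrow> nat" where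
  "cyc_succ N i = (if i + 1 = N then 0 else i + 1)"

definition cyc_pred :: "nat \<Rightarrow> nat \<Rightarrow> nat" where
  "cyc_pred N i = (if i = 0 then N - 1 else i - 1)"

lemma cyc_succ_lt: "i < N \<Longrightarrow> cyc_succ N i < N"
  unfolding cyc_succ_def by auto

lemma cyc_pred_lt: "i < N \<Longrightarrow> cyc_pred N i < N"
  unfolding cyc_pred_def by auto

lemma cyc_pred_succ: "i < N \<Longrightarrow> cyc_pred N (cyc_succ N i) = i"
  unfolding cyc_pred_def cyc_succ_def by auto

lemma cyc_succ_pred: "i < N \<Longrightarrow> cyc_succ N (cyc_pred N i) = i"
  unfolding cyc_pred_def cyc_succ_def by auto

lemma sum_cyc_succ: "(\<Sum>i<N. f (cyc_succ N i) i) = (\<Sum>j<N. f j (cyc_pred N j))"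
  by (rule sum.reindex_bij_witness[of _ "cyc_pred N" "cyc_succ N"])
    (auto simp: cyc_pred_succ cyc_succ_pred cyc_succ_lt cyc_pred_lt)

lemma sum_cyc_pred: "(\<Sum>i<N. f (cyc_pred N i) i) = (\<Sum>j<N. f j (cyc_succ N j))"
  by (rule sum.reindex_bij_witness[of _ "cyc_succ N" "cyc_pred N"])
    (auto simp: cyc_pred_succ cyc_succ_pred cyc_succ_lt cyc_pred_lt)

lemma cml_matrix_row_sum:
  assumes "N \<ge> 3" "i < N"
  shows "(\<Sum>k<N. complex_of_real (cml_matrix N a0 a1 a2 i k) * v k)
       = a1 * v i + a2 * v (cyc_succ N i) + a0 * v (cyc_pred N i)"
proof -
  have entry: "cml_matrix N a0 a1 a2 i k =
      (if k = i then a1 else 0) + (if k = cyc_succ N i then a2 else 0)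
      + (if k = cyc_pred N i then a0 else 0)" if "k < N" for k
  proof -
    have "(i + 1) mod N = cyc_succ N i" using assms unfolding cyc_succ_def by (auto simp: mod_if)
    moreover have "i = (k + 1) mod N \<longleftrightarrow> k = cyc_pred N i"
      using assms that unfolding cyc_pred_def by (auto simp: mod_if)
    moreover have "cyc_succ N i \<noteq> i" "cyc_pred N i \<noteq> i" "cyc_succ N i \<noteq> cyc_pred N i"
      using assms unfolding cyc_succ_def cyc_pred_def by auto
    ultimately show ?thesis using assms unfolding cml_matrix_def by auto
  qed
  have "(\<Sum>k<N. complex_of_real (cml_matrix N a0 a1 a2 i k) * v k)
      = (\<Sum>k<N. (if k = i then a1 * v k else 0) + (if k = cyc_succ N i then a2 * v k else 0)
                  + (if k = cyc_pred N i then a0 * v k else 0))"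
    by (rule sum.cong) (auto simp: entry distrib_right)
  also have "\<dots> = a1 * v i + a2 * v (cyc_succ N i) + a0 * v (cyc_pred N i)"
    using assms cyc_succ_lt[OF assms(2)] cyc_pred_lt[OF assms(2)]
    by (simp add: sum.distrib sum.delta')
  finally show ?thesis .
qed

lemma power_cyc_succ:
  fixes q :: "'a::comm_monoid_mult"
  assumes "q ^ N = 1" "i < N"
  shows "q ^ (cyc_succ N i * k) = q ^ k * q ^ (i * k)"
proof (cases "i + 1 = N")
  case True
  then have "k + i * k = N * k" by (metis add.commute add_mult_distrib mult_1 Suc_eq_plus1)
  then have "q ^ k * q ^ (i * k) = (q ^ N) ^ k" by (simp flip: power_add power_mult)
  then show ?thesis using True assms by (simp add: cyc_succ_def)
next
  case False
  then show ?thesis by (simp add: cyc_succ_def power_add[symmetric] algebra_simps)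
qed

lemma power_cyc_pred:
  fixes q :: "'a::field"
  assumes "q ^ N = 1" "i < N"
  shows "q ^ (cyc_pred N i * k) = inverse q ^ k * q ^ (i * k)"
proof -
  have "q \<noteq> 0" using assms by (metis less_nat_zero_code power_0_left zero_neq_one)
  moreover have "q ^ (i * k) = q ^ k * q ^ (cyc_pred N i * k)"
    using power_cyc_succ[OF assms(1) cyc_pred_lt[OF assms(2)]] cyc_succ_pred[OF assms(2)] by simp
  ultimately show ?thesis by (simp add: power_inverse field_simps)
qed

definition root_unity :: "nat \<Rightarrow> complex" where
  "root_unity N = cis (2 * pi / real N)"

lemma root_unity_power: "root_unity N ^ m = cis (2 * pi * real m / real N)"
  unfolding root_unity_def Complex.DeMoivre by (simp add: field_simps)

lemma root_unity_power_N: "N > 0 \<Longrightarrow> root_unity N ^ N = 1"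
  unfolding root_unity_power by simp

lemma root_unity_power_neq_1:
  assumes "0 < m" "m < N"
  shows "root_unity N ^ m \<noteq> 1"
proof
  assume "root_unity N ^ m = 1"
  then have "cos (2 * pi * real m / real N) = 1" unfolding root_unity_power by (simp add: complex_eq_iff)
  then obtain n :: int where "2 * pi * real m / real N = of_int n * 2 * pi"
    using cos_one_2pi_int by blast
  then have "real m = of_int n * real N" using assms by (simp add: field_simps)
  then have "int m = n * int N" by (metis of_int_eq_iff of_int_mult of_int_of_nat_eq)
  moreover have "n \<le> 0 \<Longrightarrow> n * int N \<le> 0" by (simp add: mult_nonpos_nonneg)
  moreover have "n \<ge> 1 \<Longrightarrow> n * int N \<ge> int N" using mult_right_mono[of 1 n "int N"] by simp
  ultimately show False using assms by linarith
qed

lemma sum_root_unity_orthogonal: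
  assumes "i < N" "j < N"
  shows "(\<Sum>k<N. (inverse (root_unity N) ^ j * root_unity N ^ i) ^ k) = (if j = i then of_nat N else 0)"
proof (cases "j = i")
  case True
  moreover have "root_unity N \<noteq> 0" by (simp add: root_unity_def)
  ultimately show ?thesis by (simp add: power_inverse)
next
  case False
  define w where "w = root_unity N"
  define q where "q = inverse w ^ j * w ^ i"
  have wN: "w ^ N = 1" using assms root_unity_power_N w_def by simp
  have w0: "w \<noteq> 0" by (simp add: w_def root_unity_def)
  have "(inverse w ^ j) ^ N = 1" "(w ^ i) ^ N = 1"
    using wN by (simp_all flip: power_mult add: mult.commute[of _ N] power_mult power_inverse)
  then have qN: "q ^ N = 1" unfolding q_def by (simp add: power_mult_distrib)
  have "q \<noteq> 1"
  proof (cases "j < i")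
    case True
    then have "q = w ^ (i - j)" unfolding q_def using w0 by (simp add: power_diff power_inverse field_simps)
    then show ?thesis using root_unity_power_neq_1[of "i - j" N] True assms w_def by simp
  next
    case False
    then have "i < j" using \<open>j \<noteq> i\<close> by simp
    then have "q = inverse (w ^ (j - i))" unfolding q_def using w0
      by (simp add: power_diff power_inverse field_simps)
    then show ?thesis using root_unity_power_neq_1[of "j - i" N] \<open>i < j\<close> assms w_def by auto
  qed
  then show ?thesis using False qN sum_gp_strict[of q N] q_def w_def by simp
qed

definition cml_eigenvalue :: "nat \<Rightarrow> real \<Rightarrow> real \<Rightarrow> nat \<Rightarrow> complex" where
  "cml_eigenvalue N a1 a2 k = Complex a1 (2 * a2 * sin (2 * pi * real k / real N))"

lemma cml_eigenvalue_root_unity: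
  "complex_of_real a1 + complex_of_real a2 * root_unity N ^ k
     - complex_of_real a2 * inverse (root_unity N) ^ k = cml_eigenvalue N a1 a2 k"
proof -
  have "inverse (root_unity N) ^ k = cis (- (2 * pi * real k / real N))"
    by (simp only: power_inverse root_unity_power cis_inverse)
  then show ?thesis by (simp add: root_unity_power cml_eigenvalue_def complex_eq_iff)
qed

lemma is_eigenvalue_cml_eigenvalue:
  assumes "N \<ge> 3"
  shows "is_eigenvalue N (cml_matrix N (-a2) a1 a2) (cml_eigenvalue N a1 a2 k)"
proof -
  define w where "w = root_unity N"
  have wN: "w ^ N = 1" using root_unity_power_N assms w_def by simp
  define v where "v = (\<lambda>i. w ^ (i * k))"
  have "(\<Sum>j<N. complex_of_real (cml_matrix N (-a2) a1 a2 i j) * v j) = cml_eigenvalue N a1 a2 k * v i"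
    if i: "i < N" for i
  proof -
    have "(\<Sum>j<N. complex_of_real (cml_matrix N (-a2) a1 a2 i j) * v j)
        = a1 * v i + a2 * v (cyc_succ N i) + (- a2) * v (cyc_pred N i)"
      using cml_matrix_row_sum[OF assms i] by simp
    also have "\<dots> = (a1 + a2 * w ^ k - a2 * inverse w ^ k) * v i"
      unfolding v_def power_cyc_succ[OF wN i] power_cyc_pred[OF wN i] by (simp add: algebra_simps)
    finally show ?thesis using cml_eigenvalue_root_unity w_def by simp
  qed
  moreover have "\<exists>i<N. v i \<noteq> 0" unfolding v_def using assms by (intro exI[of _ 0]) simp
  ultimately show ?thesis unfolding is_eigenvalue_def by blast
qed

(* A cyclic index shift multiplies the k-th Fourier coefficient c of v by a root of unity,
   whence \<mu> c = cml_eigenvalue N a1 a2 k * c. *)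
lemma cml_eigenvector_Fourier_coeff:
  assumes "N \<ge> 3" "k < N" "\<mu> \<noteq> cml_eigenvalue N a1 a2 k"
    and ev: "\<forall>i<N. (\<Sum>j<N. complex_of_real (cml_matrix N (-a2) a1 a2 i j) * v j) = \<mu> * v i"
  shows "(\<Sum>i<N. v i * inverse (root_unity N) ^ (i * k)) = 0"
proof -
  define w where "w = root_unity N"
  define z where "z = inverse w"
  define c where "c = (\<Sum>i<N. v i * z ^ (i * k))"
  have wN: "w ^ N = 1" using root_unity_power_N assms w_def by simp
  have zN: "z ^ N = 1" unfolding z_def power_inverse using wN by simp
  have iz: "inverse z = w" unfolding z_def by simp
  have "\<mu> * c = (\<Sum>i<N. (\<mu> * v i) * z ^ (i * k))"
    unfolding c_def by (simp add: sum_distrib_left mult.assoc)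
  also have "\<dots> = (\<Sum>i<N. (a1 * v i + a2 * v (cyc_succ N i) + (- a2) * v (cyc_pred N i)) * z ^ (i * k))"
    by (rule sum.cong) (use ev cml_matrix_row_sum[OF assms(1)] in auto)
  also have "\<dots> = a1 * c + a2 * (\<Sum>i<N. v (cyc_succ N i) * z ^ (i * k))
                   - a2 * (\<Sum>i<N. v (cyc_pred N i) * z ^ (i * k))"
    unfolding c_def by (simp add: algebra_simps sum.distrib sum_distrib_left sum_subtractf)
  also have "(\<Sum>i<N. v (cyc_succ N i) * z ^ (i * k)) = (\<Sum>j<N. v j * z ^ (cyc_pred N j * k))"
    using sum_cyc_succ[of "\<lambda>a b. v a * z ^ (b * k)"] by simp
  also have "\<dots> = w ^ k * c"
    unfolding c_def sum_distrib_left
    by (rule sum.cong) (auto simp: power_cyc_pred[OF zN] iz)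
  also have "(\<Sum>i<N. v (cyc_pred N i) * z ^ (i * k)) = (\<Sum>j<N. v j * z ^ (cyc_succ N j * k))"
    using sum_cyc_pred[of "\<lambda>a b. v a * z ^ (b * k)"] by simp
  also have "\<dots> = z ^ k * c"
    unfolding c_def sum_distrib_left by (rule sum.cong) (auto simp: power_cyc_succ[OF zN])
  finally have "\<mu> * c = (a1 + a2 * w ^ k - a2 * inverse w ^ k) * c"
    unfolding z_def by (simp add: algebra_simps)
  then have "\<mu> * c = cml_eigenvalue N a1 a2 k * c" using cml_eigenvalue_root_unity w_def by simp
  then show ?thesis using assms(3) unfolding c_def z_def w_def by simp
qed

lemma is_eigenvalue_cml_imp:
  assumes "N \<ge> 3" "is_eigenvalue N (cml_matrix N (-a2) a1 a2) \<mu>"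
  shows "\<exists>k<N. \<mu> = cml_eigenvalue N a1 a2 k"
proof (rule ccontr)
  assume "\<not> (\<exists>k<N. \<mu> = cml_eigenvalue N a1 a2 k)"
  then have coeff0: "(\<Sum>i<N. v i * inverse (root_unity N) ^ (i * k)) = 0" if "k < N"
    and "\<forall>i<N. (\<Sum>j<N. complex_of_real (cml_matrix N (-a2) a1 a2 i j) * v j) = \<mu> * v i" for k v
    using cml_eigenvector_Fourier_coeff[OF assms(1)] that by blast
  obtain v i0 where i0: "i0 < N" "v i0 \<noteq> 0"
    and ev: "\<forall>i<N. (\<Sum>j<N. complex_of_real (cml_matrix N (-a2) a1 a2 i j) * v j) = \<mu> * v i"
    using assms(2) unfolding is_eigenvalue_def by blast
  define w where "w = root_unity N"
  \<comment> \<open>Fourier inversion at the index i0\<close>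
  have "0 = (\<Sum>k<N. (\<Sum>j<N. v j * inverse w ^ (j * k)) * w ^ (i0 * k))"
    using coeff0 ev w_def by simp
  also have "\<dots> = (\<Sum>j<N. v j * (\<Sum>k<N. (inverse w ^ j * w ^ i0) ^ k))"
    unfolding sum_distrib_left sum_distrib_right
    by (subst sum.swap) (simp add: power_mult_distrib power_mult[symmetric] mult.commute mult.left_commute)
  also have "\<dots> = (\<Sum>j<N. v j * (if j = i0 then of_nat N else 0))"
    using i0 by (intro sum.cong) (auto simp: sum_root_unity_orthogonal w_def)
  also have "\<dots> = v i0 * of_nat N" using i0 by (simp add: if_distrib sum.delta' cong: if_cong)
  finally show False using i0 by simp
qed

lemma cml_matrix_small_row_sum:
  assumes "N = 1 \<or> N = 2" "i < N"
  shows "(\<Sum>k<N. complex_of_real (cml_matrix N (-a2) a1 a2 i k) * v k) = a1 * v i"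
proof (cases "N = 1")
  case True
  then show ?thesis using assms by (simp add: cml_matrix_def)
next
  case False
  then have N2: "N = 2" using assms by simp
  have "(\<Sum>k<N. complex_of_real (cml_matrix N (-a2) a1 a2 i k) * v k)
      = (\<Sum>k<N. (if k = i then a1 * v k else 0))"
    unfolding N2 by (rule sum.cong) (auto simp: cml_matrix_def)
  also have "\<dots> = a1 * v i" using assms by (simp add: sum.delta')
  finally show ?thesis .
qed

lemma is_eigenvalue_cml_small_iff:
  assumes "N = 1 \<or> N = 2"
  shows "is_eigenvalue N (cml_matrix N (-a2) a1 a2) \<mu> \<longleftrightarrow> \<mu> = complex_of_real a1"
proof
  assume "is_eigenvalue N (cml_matrix N (-a2) a1 a2) \<mu>"
  then obtain v i where vi: "i < N" "v i \<noteq> 0"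
    "\<forall>i<N. (\<Sum>k<N. complex_of_real (cml_matrix N (-a2) a1 a2 i k) * v k) = \<mu> * v i"
    unfolding is_eigenvalue_def by blast
  then have "a1 * v i = \<mu> * v i" using cml_matrix_small_row_sum[OF assms vi(1), of a2 a1 v] by simp
  then show "\<mu> = complex_of_real a1" using vi(2) by simp
next
  assume "\<mu> = complex_of_real a1"
  then show "is_eigenvalue N (cml_matrix N (-a2) a1 a2) \<mu>"
    using assms cml_matrix_small_row_sum[OF assms, of _ a2 a1 "\<lambda>_. 1"]
    unfolding is_eigenvalue_def by (intro exI[of _ "\<lambda>_. 1"] conjI exI[of _ 0]) auto
qed

lemma abs_cos_add_of_int_pi: "\<bar>cos (x + of_int m * pi)\<bar> = \<bar>cos x\<bar>"
proof -
  have s: "sin (of_int m * pi) = 0" using sin_times_pi_eq_0[of "of_int m"] by simp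
  then have "(cos (of_int m * pi))^2 = 1" using sin_cos_squared_add[of "of_int m * pi"] by simp
  then have "\<bar>cos (of_int m * pi)\<bar> = 1" using power2_eq_1_iff by fastforce
  then show ?thesis by (simp add: cos_add s abs_mult)
qed

(* |sin (2\<pi>k/N)| = |cos (\<pi>(4k - N)/(2N))| only depends on 4k - N modulo 2N. *)
lemma abs_sin_eq_cos_offset:
  fixes e m :: int
  assumes "N > 0" "4 * int k - int N = e + 2 * int N * m" "\<bar>e\<bar> \<le> int N"
  shows "\<bar>sin (2 * pi * real k / real N)\<bar> = cos (pi * real_of_int \<bar>e\<bar> / (2 * real N))"
proof -
  have r: "4 * real k - real N = real_of_int e + 2 * real N * real_of_int m"
    using arg_cong[OF assms(2), of real_of_int] by simp
  have "2 * pi * real k / real N = pi * (4 * real k - real N) / (2 * real N) + pi/2"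
    using assms(1) by (simp add: field_simps)
  also have "\<dots> = (pi * real_of_int e / (2 * real N) + of_int m * pi) + pi/2"
    unfolding r using assms(1) by (simp add: field_simps)
  finally have "\<bar>sin (2 * pi * real k / real N)\<bar> = \<bar>cos (pi * real_of_int e / (2 * real N))\<bar>"
    using abs_cos_add_of_int_pi by (simp add: sin_add)
  also have "\<dots> = \<bar>cos (pi * real_of_int \<bar>e\<bar> / (2 * real N))\<bar>"
    by (cases "e \<ge> 0") (simp_all add: abs_if)
  also have "\<dots> = cos (pi * real_of_int \<bar>e\<bar> / (2 * real N))"
  proof -
    have "real_of_int \<bar>e\<bar> \<le> real N" using assms(3) by linarith
    then have "pi * real_of_int \<bar>e\<bar> / (2 * real N) \<le> pi / 2" using assms(1)
      by (simp add: field_simps)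
    moreover have "0 \<le> pi * real_of_int \<bar>e\<bar> / (2 * real N)" by simp
    ultimately show ?thesis by (intro abs_of_nonneg cos_ge_zero) linarith+
  qed
  finally show ?thesis .
qed

definition jstar :: "nat \<Rightarrow> nat" where
  "jstar N = (if odd N then nat \<lceil>(real N - 1) / 4\<rceil> else N div 4)"

lemma jstar_offset:
  "(N mod 4 = 0 \<and> 4 * int (jstar N) - int N = 0) \<or> (N mod 4 = 1 \<and> 4 * int (jstar N) - int N = -1)
   \<or> (N mod 4 = 2 \<and> 4 * int (jstar N) - int N = -2) \<or> (N mod 4 = 3 \<and> 4 * int (jstar N) - int N = 1)"
proof -
  define q where "q = N div 4"
  have N: "N = 4 * q + N mod 4" "N mod 4 < 4" unfolding q_def by auto
  consider "N mod 4 = 0 \<or> N mod 4 = 2" | "N mod 4 = 1" | "N mod 4 = 3" by linarith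
  then show ?thesis
  proof cases
    assume r: "N mod 4 = 0 \<or> N mod 4 = 2"
    then have "even N" by presburger
    then have "jstar N = q" by (simp add: jstar_def q_def)
    then show ?thesis using r N by auto
  next
    assume r: "N mod 4 = 1"
    then have "odd N" by presburger
    moreover have "(real N - 1) / 4 = real q" using N r by simp
    ultimately have "jstar N = q" by (simp add: jstar_def)
    then show ?thesis using r N by auto
  next
    assume r: "N mod 4 = 3"
    then have "odd N" by presburger
    moreover have "\<lceil>(real N - 1) / 4\<rceil> = int q + 1"
      using N r by (intro ceiling_unique) auto
    ultimately have "jstar N = q + 1" by (simp add: jstar_def)
    then show ?thesis using r N by auto
  qed
qed

(* Every e \<equiv> 4k - N (mod 2N) satisfies the hypotheses, so j* maximises |sin (2\<pi>k/N)|. *)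
lemma jstar_offset_minimal:
  fixes e :: int
  assumes "even (e + int N)" and "even N \<Longrightarrow> 4 dvd (e + int N)"
  shows "\<bar>4 * int (jstar N) - int N\<bar> \<le> \<bar>e\<bar>"
  using jstar_offset[of N] assms by presburger

lemma abs_sin_le_jstar:
  assumes "N \<ge> 3"
  shows "sin (2 * pi * real (jstar N) / real N) > 0"
    and "\<bar>sin (2 * pi * real k / real N)\<bar> \<le> sin (2 * pi * real (jstar N) / real N)"
proof -
  define j where "j = jstar N"
  define es where "es = 4 * int j - int N"
  have N0: "N > 0" using assms by simp
  have esb: "\<bar>es\<bar> \<le> 2" using jstar_offset[of N] es_def j_def by auto
  have "1 \<le> j" "2 * j < N" using esb assms unfolding es_def by linarith+
  then show sj: "sin (2 * pi * real (jstar N) / real N) > 0"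
    using N0 unfolding j_def by (intro sin_gt_zero) (simp_all add: field_simps)
  have sj_eq: "sin (2 * pi * real j / real N) = cos (pi * real_of_int \<bar>es\<bar> / (2 * real N))"
    using abs_sin_eq_cos_offset[OF N0, of j es 0] es_def esb assms sj j_def by simp
  define m where "m = (4 * int k) div (2 * int N)"
  define e where "e = (4 * int k) mod (2 * int N) - int N"
  have dm: "4 * int k - int N = e + 2 * int N * m" unfolding e_def m_def
    using div_mult_mod_eq[of "4 * int k" "2 * int N"] by (simp add: algebra_simps)
  have "0 \<le> (4 * int k) mod (2 * int N)" "(4 * int k) mod (2 * int N) < 2 * int N" using N0 by auto
  then have eb: "\<bar>e\<bar> \<le> int N" unfolding e_def by linarith
  have "e + int N = 2 * (2 * int k - int N * m)" using dm by (simp add: algebra_simps)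
  moreover have "even N \<Longrightarrow> e + int N = 4 * (int k - int (N div 2) * m)"
    using dm by (auto simp: algebra_simps elim!: evenE)
  ultimately have "\<bar>es\<bar> \<le> \<bar>e\<bar>" unfolding es_def j_def by (intro jstar_offset_minimal) auto
  have "\<bar>sin (2 * pi * real k / real N)\<bar> = cos (pi * real_of_int \<bar>e\<bar> / (2 * real N))"
    by (rule abs_sin_eq_cos_offset[OF N0 dm eb])
  also have "\<dots> \<le> cos (pi * real_of_int \<bar>es\<bar> / (2 * real N))"
  proof (rule cos_monotone_0_pi_le)
    have "real_of_int \<bar>es\<bar> \<le> real_of_int \<bar>e\<bar>" using \<open>\<bar>es\<bar> \<le> \<bar>e\<bar>\<close> by linarith
    then show "pi * real_of_int \<bar>es\<bar> / (2 * real N) \<le> pi * real_of_int \<bar>e\<bar> / (2 * real N)"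
      using N0 by (intro divide_right_mono mult_left_mono) auto
    have "real_of_int \<bar>e\<bar> \<le> real N" using eb by linarith
    then show "pi * real_of_int \<bar>e\<bar> / (2 * real N) \<le> pi" using N0 by (simp add: field_simps)
  qed simp
  finally show "\<bar>sin (2 * pi * real k / real N)\<bar> \<le> sin (2 * pi * real (jstar N) / real N)"
    using sj_eq j_def by simp
qed

lemma cml_eigenvalues_in_beta_inside_iff:
  assumes "0 < a" "a < 1" "N \<ge> 3"
  shows "(\<forall>\<mu>. is_eigenvalue N (cml_matrix N (-a2) a1 a2) \<mu> \<longrightarrow> \<mu> \<in> beta_inside a)
     \<longleftrightarrow> a1 < 1 \<and> cml_eigenvalue N a1 a2 (jstar N) \<in> beta_inside a"
proof
  assume H: "\<forall>\<mu>. is_eigenvalue N (cml_matrix N (-a2) a1 a2) \<mu> \<longrightarrow> \<mu> \<in> beta_inside a"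
  have "cml_eigenvalue N a1 a2 0 = complex_of_real a1" by (simp add: cml_eigenvalue_def complex_eq_iff)
  then have "a1 < 1"
    using H is_eigenvalue_cml_eigenvalue[OF assms(3), of a2 a1 0] of_real_in_beta_inside_iff[OF assms(1,2)]
    by auto
  then show "a1 < 1 \<and> cml_eigenvalue N a1 a2 (jstar N) \<in> beta_inside a"
    using H is_eigenvalue_cml_eigenvalue[OF assms(3)] by blast
next
  assume H: "a1 < 1 \<and> cml_eigenvalue N a1 a2 (jstar N) \<in> beta_inside a"
  show "\<forall>\<mu>. is_eigenvalue N (cml_matrix N (-a2) a1 a2) \<mu> \<longrightarrow> \<mu> \<in> beta_inside a"
  proof (intro allI impI)
    fix \<mu> assume "is_eigenvalue N (cml_matrix N (-a2) a1 a2) \<mu>"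
    then obtain k where "\<mu> = cml_eigenvalue N a1 a2 k" using is_eigenvalue_cml_imp[OF assms(3)] by blast
    moreover have "\<bar>2 * a2 * sin (2 * pi * real k / real N)\<bar>
        \<le> \<bar>2 * a2 * sin (2 * pi * real (jstar N) / real N)\<bar>"
      using abs_sin_le_jstar(2)[OF assms(3), of k] by (simp add: abs_mult mult_left_mono)
    ultimately show "\<mu> \<in> beta_inside a"
      using beta_inside_shrink_Im[OF assms(1,2)] H unfolding cml_eigenvalue_def by blast
  qed
qed

lemma stable_region_eq_inside_gamma_jstar:
  assumes "0 < a" "a < 1" "N \<ge> 3"
  shows "stable_region a N
       = {(a1, a2). a1 < 1 \<and> (a1, a2) \<in> inside (path_image (gamma_curve a N (jstar N)))}"
proof -
  have "sin (2 * pi * real (jstar N) / real N) \<noteq> 0" using abs_sin_le_jstar(1)[OF assms(3)] by simp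
  note inside = inside_gamma_curve[OF assms(1,2) this]
  have "(a1, a2) \<in> stable_region a N
      \<longleftrightarrow> a1 < 1 \<and> (a1, a2) \<in> inside (path_image (gamma_curve a N (jstar N)))" for a1 a2
    unfolding stable_region_def Omega_eq_beta_inside[OF assms(1,2)] inside
    by (simp add: cml_eigenvalues_in_beta_inside_iff[OF assms] cml_eigenvalue_def ac_simps)
  then show ?thesis by auto
qed

theorem theorem4:
  fixes \<alpha> :: real and N :: nat
  assumes "0 < \<alpha>" and "\<alpha> < 1"
  shows "(N = 1 \<or> N = 2 \<longrightarrow>
            stable_region \<alpha> N = {(a1, a2). 1 - 2 powr \<alpha> < a1 \<and> a1 < 1})
       \<and> (N \<ge> 3 \<and> odd N \<longrightarrow>
            stable_region \<alpha> N =
              {(a1, a2). a1 < 1 \<and> (a1, a2) \<in> inside (path_image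
                 (gamma_curve \<alpha> N (nat \<lceil>(real N - 1) / 4\<rceil>)))})
       \<and> (N \<ge> 4 \<and> even N \<longrightarrow>
            stable_region \<alpha> N =
              {(a1, a2). a1 < 1 \<and> (a1, a2) \<in> inside (path_image
                 (gamma_curve \<alpha> N (N div 4)))})"
proof (intro conjI impI)
  assume small: "N = 1 \<or> N = 2"
  show "stable_region \<alpha> N = {(a1, a2). 1 - 2 powr \<alpha> < a1 \<and> a1 < 1}"
    unfolding stable_region_def Omega_eq_beta_inside[OF assms] is_eigenvalue_cml_small_iff[OF small]
    using of_real_in_beta_inside_iff[OF assms] by auto
qed (use stable_region_eq_inside_gamma_jstar[OF assms] in \<open>simp_all add: jstar_def\<close>)

end
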